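(* For fixed $\theta$, consider the function of $v\in\mathbb R^d$ \[ H(v,\theta)=\frac{\big\langle F(\Phi(\theta)+\sqrt\epsilon\,v),\ \Phi'(\theta)\big\rangle_\theta}{1-\sqrt\epsilon\langle v,\Phi''(\theta)\rangle_\theta-\sqrt\epsilon\big\langle v,\frac{d}{da}\big[P(a)^{-\top}P(a)^{-1}\big]\big|_{a=\theta}\Phi'(\theta)\big\rangle} \] (defined for $v$ near $0$). Then $H(0,\theta)=\omega_0$ and the derivative of $H$ with respect to $v$ at $v=0$ vanishes: $\frac{\partial H}{\partial v}(0,\theta)\cdot v=0$ for all $v\in\mathbb R^d$. Equivalently, for every fixed $v\in\mathbb R^d$, \[ \langle J(\theta)v,\Phi'(\theta)\rangle_\theta=-\omega_0\frac{d}{d\theta}\langle v,\Phi'(\theta)\rangle_\theta . \]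
   Context: Let $F:\mathbb R^d\to\mathbb R^d$ be $C^2$, and suppose $du/dt=F(u)$ has a periodic solution $u(t)=\Phi(\omega_0 t)$ with $\Phi$ $2\pi$-periodic and $\omega_0>0$ (so $F(\Phi(\theta))=\omega_0\Phi'(\theta)$); let $J(\theta)=DF(\Phi(\theta))$; $\epsilon>0$. Let $P(\theta)$ be a $2\pi$-periodic, $C^2$, everywhere invertible real matrix function whose first column is $\Phi'(\theta)$, and $\mathcal S=\mathrm{diag}(\nu_1,\dots,\nu_d)$ real diagonal with $\nu_1=0$, such that $\omega_0P'(\theta)=J(\theta)P(\theta)-P(\theta)\mathcal S$. Weighted inner product: $\langle x,y\rangle_\theta=\langle P(\theta)^{-1}x,P(\theta)^{-1}y\rangle$ with $\langle\cdot,\cdot\rangle$ the Euclidean inner product; $P^{-\top}$ denotes $(P^{-1})^\top$. *)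

theory Defs
  imports "HOL-Analysis.Analysis"
begin

definition C2_map :: "('a::real_normed_vector \<Rightarrow> 'b::real_normed_vector) \<Rightarrow> bool" where
  "C2_map f \<longleftrightarrow> (\<exists>(Df :: 'a \<Rightarrow> ('a \<Rightarrow>\<^sub>L 'b)) (DDf :: 'a \<Rightarrow> ('a \<Rightarrow>\<^sub>L ('a \<Rightarrow>\<^sub>L 'b))).
      (\<forall>x. (f has_derivative blinfun_apply (Df x)) (at x)) \<and>
      (\<forall>x. (Df has_derivative blinfun_apply (DDf x)) (at x)) \<and>
      continuous_on UNIV DDf)"

definition winner :: "(real \<Rightarrow> real^'n^'n) \<Rightarrow> real \<Rightarrow> real^'n \<Rightarrow> real^'n \<Rightarrow> real" where
  "winner P \<theta> x y = (matrix_inv (P \<theta>) *v x) \<bullet> (matrix_inv (P \<theta>) *v y)"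

definition Hfun :: "(real^'n \<Rightarrow> real^'n) \<Rightarrow> (real \<Rightarrow> real^'n) \<Rightarrow> (real \<Rightarrow> real^'n^'n)
    \<Rightarrow> real \<Rightarrow> real^'n \<Rightarrow> real \<Rightarrow> real" where
  "Hfun F \<Phi> P \<epsilon> v \<theta> =
     (let \<Phi>1 = (\<lambda>a. vector_derivative \<Phi> (at a));
          \<Phi>2 = vector_derivative \<Phi>1 (at \<theta>);
          M' = vector_derivative (\<lambda>a. transpose (matrix_inv (P a)) ** matrix_inv (P a)) (at \<theta>)
      in winner P \<theta> (F (\<Phi> \<theta> + sqrt \<epsilon> *\<^sub>R v)) (\<Phi>1 \<theta>) /
         (1 - sqrt \<epsilon> * winner P \<theta> v \<Phi>2 - sqrt \<epsilon> * (v \<bullet> (M' *v \<Phi>1 \<theta>))))"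

end

theory Submission
  imports Defs
begin

text \<open>Write \<open>Q = P\<^sup>-\<^sup>1\<close> and \<open>e\<^sub>k\<close> for the \<open>k\<close>-th unit vector. Since \<open>\<Phi>' = P e\<^sub>k\<close>, the weighted
  pairing \<open>\<langle>x, \<Phi>'\<rangle>\<^sub>\<theta>\<close> is just the \<open>k\<close>-th coordinate \<open>(Q x)\<^sub>k\<close>. Differentiating \<open>Q P = 1\<close> and using
  the Floquet equation gives \<open>\<omega>\<^sub>0 Q' = S Q - Q J\<close>, whose \<open>k\<close>-th row is \<open>-(Q J)\<^sub>k\<close> because
  \<open>\<nu>\<^sub>k = 0\<close>; this is the third claim. The linear part of the denominator of \<open>H\<close> collapses to
  \<open>\<surd>\<epsilon> (Q' v)\<^sub>k\<close>, the linear part of the numerator is \<open>\<surd>\<epsilon> (Q J v)\<^sub>k\<close> and its constant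
  part is \<open>(Q F(\<Phi>))\<^sub>k = \<omega>\<^sub>0\<close>, so by the same row identity the two contributions to
  \<open>\<partial>H/\<partial>v\<close> cancel.\<close>

lemma column_eq_matrix_vector_mult_axis: "column k (A::real^'n^'m) = A *v axis k 1"
  by (simp add: column_def vec_eq_iff matrix_vector_mult_def axis_def if_distrib cong: if_cong)

lemma bounded_bilinear_matrix_matrix_mult:
  "bounded_bilinear (\<lambda>(A::real^'n^'m) (B::real^'p^'n). A ** B)"
  unfolding bilinear_conv_bounded_bilinear[symmetric] bilinear_def
  by (auto simp: linear_iff vec_eq_iff matrix_matrix_mult_def sum.distrib sum_distrib_left algebra_simps)

lemma bounded_bilinear_matrix_vector_mult:
  "bounded_bilinear (\<lambda>(A::real^'n^'m) (x::real^'n). A *v x)"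
  unfolding bilinear_conv_bounded_bilinear[symmetric] bilinear_def
  by (auto simp: linear_iff vec_eq_iff matrix_vector_mult_def sum.distrib sum_distrib_left algebra_simps)

lemma bounded_linear_transpose: "bounded_linear (transpose :: real^'n^'m \<Rightarrow> real^'m^'n)"
  unfolding linear_conv_bounded_linear[symmetric]
  by (auto simp: linear_iff vec_eq_iff transpose_def)

lemma inner_transpose_matrix_vector: "(x::real^'n) \<bullet> (transpose A *v y) = (A *v x) \<bullet> (y::real^'m)"
  by (metis inner_commute dot_lmul_matrix transpose_matrix_vector)

lemma diagonal_matrix_vector_nth:
  "((\<chi> i j. if i = j then \<nu> $ i else 0) *v (y::real^'n)) $ k = \<nu> $ k * y $ k"
proof -
  have "((\<chi> i j. if i = j then \<nu> $ i else 0) *v y) $ k = (\<Sum>j\<in>UNIV. if j = k then \<nu> $ k * y $ k else 0)"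
    unfolding matrix_vector_mult_def vec_lambda_beta by (intro sum.cong) auto
  then show ?thesis by simp
qed

lemma
  assumes "invertible (A::real^'n^'n)"
  shows matrix_inv_right: "A ** matrix_inv A = mat 1"
    and matrix_inv_left: "matrix_inv A ** A = mat 1"
  using someI_ex[OF assms[unfolded invertible_def]] unfolding matrix_inv_def by auto

lemma matrix_inv_mult_column:
  assumes "invertible (A::real^'n^'n)"
  shows "matrix_inv A *v column k A = axis k 1"
  by (simp add: column_eq_matrix_vector_mult_axis matrix_vector_mul_assoc matrix_inv_left[OF assms])

lemma matrix_inv_nth_cramer:
  assumes "invertible (A::real^'n^'n)"
  shows "matrix_inv A $ i $ j = det (\<chi> r c. if c = i then axis j 1 $ r else A $ r $ c) / det A"
proof -
  have "A *v (matrix_inv A *v axis j 1) = axis j 1"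
    by (simp add: matrix_vector_mul_assoc matrix_inv_right[OF assms])
  with cramer[OF invertible_det_nz[THEN iffD1, OF assms]]
  have "matrix_inv A *v axis j 1 = (\<chi> c. det (\<chi> r c'. if c' = c then axis j 1 $ r else A $ r $ c') / det A)"
    by blast
  then have "(matrix_inv A *v axis j 1) $ i = det (\<chi> r c. if c = i then axis j 1 $ r else A $ r $ c) / det A"
    by simp
  then show ?thesis
    by (simp flip: column_eq_matrix_vector_mult_axis add: column_def)
qed

lemma bounded_linear_axis: "bounded_linear (axis i :: 'a::real_normed_vector \<Rightarrow> 'a^'n)"
proof (rule bounded_linear_intro[where K=1])
  fix x y :: 'a and r :: real
  show "axis i (x + y) = (axis i x :: 'a^'n) + axis i y"
    and "axis i (r *\<^sub>R x) = r *\<^sub>R (axis i x :: 'a^'n)"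
    by (simp_all add: vec_eq_iff axis_def)
  have "(\<Sum>j\<in>UNIV. (norm ((axis i x :: 'a^'n) $ j))\<^sup>2) = (\<Sum>j\<in>UNIV. if j = i then (norm x)\<^sup>2 else 0)"
    by (rule sum.cong) (auto simp: axis_def)
  then show "norm (axis i x :: 'a^'n) \<le> norm x * 1"
    by (simp add: norm_vec_def L2_set_def)
qed

lemma differentiable_vec_componentwise:
  fixes f :: "'a::real_normed_vector \<Rightarrow> 'b::real_normed_vector^'n"
  assumes "\<And>i. (\<lambda>a. f a $ i) differentiable F"
  shows "f differentiable F"
proof -
  have "(\<lambda>a. \<Sum>i\<in>UNIV. axis i (f a $ i)) differentiable F"
  proof (intro differentiable_sum ballI)
    fix i show "(\<lambda>a. axis i (f a $ i)) differentiable F"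
      using assms[of i] bounded_linear.has_derivative[OF bounded_linear_axis[of i]]
      unfolding differentiable_def by blast
  qed simp
  moreover have "(\<Sum>i\<in>UNIV. axis i (x $ i)) = x" for x :: "'b^'n"
    by (simp add: vec_eq_iff axis_def sum.delta' if_distrib cong: if_cong)
  ultimately show ?thesis by simp
qed

lemma differentiable_matrix_nth:
  fixes M :: "'a::real_normed_vector \<Rightarrow> real^'n^'m"
  assumes "M differentiable (at x)"
  shows "(\<lambda>a. M a $ i $ j) differentiable (at x)"
proof -
  have "bounded_linear (\<lambda>A::real^'n^'m. A $ i $ j)"
    by (rule bounded_linear_compose[OF bounded_linear_vec_nth bounded_linear_vec_nth])
  from bounded_linear.has_derivative[OF this] assms show ?thesis
    unfolding differentiable_def by blast
qed

lemma differentiable_det: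
  fixes M :: "'a::real_normed_vector \<Rightarrow> real^'n^'n"
  assumes "\<And>i j. (\<lambda>a. M a $ i $ j) differentiable (at x)"
  shows "(\<lambda>a. det (M a)) differentiable (at x)"
proof -
  obtain D where D: "\<And>i j. ((\<lambda>a. M a $ i $ j) has_derivative D i j) (at x)"
    using assms unfolding differentiable_def by metis
  have "(\<lambda>a. \<Prod>i\<in>UNIV. M a $ i $ p i) differentiable (at x)" for p :: "'n \<Rightarrow> 'n"
    using has_derivative_prod[of UNIV "\<lambda>i a. M a $ i $ p i" "\<lambda>i. D i (p i)"] D
    unfolding differentiable_def by blast
  then show ?thesis
    unfolding det_def by (intro differentiable_sum ballI differentiable_mult differentiable_const) simp
qed

lemma differentiable_matrix_inv:
  fixes P :: "'a::real_normed_vector \<Rightarrow> real^'n^'n"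
  assumes inv: "\<And>t. invertible (P t)" and "P differentiable (at x)"
  shows "(\<lambda>t. matrix_inv (P t)) differentiable (at x)"
proof (intro differentiable_vec_componentwise)
  fix i j
  have "(\<lambda>t. det (\<chi> r c. if c = i then axis j 1 $ r else P t $ r $ c) / det (P t)) differentiable (at x)"
  proof (intro differentiable_divide differentiable_det)
    fix r c
    show "(\<lambda>t. (\<chi> r c. if c = i then axis j 1 $ r else P t $ r $ c) $ r $ c) differentiable (at x)"
      by (cases "c = i") (simp_all add: differentiable_matrix_nth[OF assms(2)])
    show "(\<lambda>t. P t $ r $ c) differentiable (at x)" by (rule differentiable_matrix_nth[OF assms(2)])
    show "det (P x) \<noteq> 0" using inv invertible_det_nz by blast
  qed
  then show "(\<lambda>t. matrix_inv (P t) $ i $ j) differentiable (at x)"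
    by (simp add: matrix_inv_nth_cramer[OF inv])
qed

lemma has_vector_derivative_matrix_inv:
  fixes P :: "real \<Rightarrow> real^'n^'n"
  assumes inv: "\<And>s. invertible (P s)" and P': "(P has_vector_derivative P') (at t)"
  shows "((\<lambda>s. matrix_inv (P s)) has_vector_derivative
           - (matrix_inv (P t) ** P' ** matrix_inv (P t))) (at t)"
proof -
  let ?Q = "\<lambda>s. matrix_inv (P s)"
  note mm = bounded_bilinear_matrix_matrix_mult
  obtain Q' where Q': "(?Q has_vector_derivative Q') (at t)"
    using differentiable_matrix_inv[OF inv differentiableI_vector[OF P']]
    by (metis vector_derivative_works)
  have "((\<lambda>s. ?Q s ** P s) has_vector_derivative (?Q t ** P' + Q' ** P t)) (at t)"
    by (rule bounded_bilinear.has_vector_derivative[OF mm Q' P'])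
  moreover have "((\<lambda>s. ?Q s ** P s) has_vector_derivative 0) (at t)"
    by (simp add: matrix_inv_left[OF inv])
  ultimately have "(?Q t ** P' + Q' ** P t) ** ?Q t = 0"
    using vector_derivative_unique_at by fastforce
  then have "?Q t ** P' ** ?Q t + Q' = 0"
    by (simp add: bounded_bilinear.add_left[OF mm] matrix_inv_right[OF inv] flip: matrix_mul_assoc)
  then have "Q' = - (?Q t ** P' ** ?Q t)"
    by (simp add: eq_neg_iff_add_eq_0 add.commute)
  with Q' show ?thesis by simp
qed

lemma C2_map_differentiable: "C2_map f \<Longrightarrow> f differentiable (at x)"
  unfolding C2_map_def differentiable_def by blast

lemma C2_map_has_derivative_matrix:
  fixes F :: "real^'n \<Rightarrow> real^'m"
  assumes "C2_map F"
  shows "(F has_derivative (\<lambda>h. matrix (frechet_derivative F (at x)) *v h)) (at x)"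
proof -
  from assms obtain DF where DF: "(F has_derivative blinfun_apply DF) (at x)"
    unfolding C2_map_def by blast
  have "(\<lambda>h. matrix (frechet_derivative F (at x)) *v h) = blinfun_apply DF"
    unfolding frechet_derivative_at[OF DF, symmetric]
    by (rule matrix_vector_mul(3)[OF blinfun.bounded_linear_right])
  with DF show ?thesis by simp
qed

lemma winner_column:
  assumes "invertible (P a)"
  shows "winner P a x (column k (P a)) = (matrix_inv (P a) *v x) $ k"
  by (simp add: winner_def matrix_inv_mult_column[OF assms] inner_axis)

lemma floquet_inverse_derivative_row:
  fixes P P' J :: "real^'n^'n"
  assumes inv: "invertible P"
    and floquet: "\<omega> *\<^sub>R P' = J ** P - P ** (\<chi> i j. if i = j then \<nu> $ i else 0)"
    and "\<nu> $ k = 0"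
  shows "\<omega> * ((- (matrix_inv P ** P' ** matrix_inv P)) *v h) $ k = - (matrix_inv P *v (J *v h)) $ k"
proof -
  let ?Q = "matrix_inv P" and ?S = "(\<chi> i j. if i = j then \<nu> $ i else 0) :: real^'n^'n"
  note mv = bounded_bilinear_matrix_vector_mult
  have P': "(\<omega> *\<^sub>R P') *v y = J *v (P *v y) - P *v (?S *v y)" for y
    by (simp add: floquet bounded_bilinear.diff_left[OF mv] matrix_vector_mul_assoc)
  have "(- (?Q ** P' ** ?Q)) *v h = - (?Q *v (P' *v (?Q *v h)))"
    by (simp add: bounded_bilinear.minus_left[OF mv] matrix_vector_mul_assoc matrix_mul_assoc)
  then have "\<omega> *\<^sub>R ((- (?Q ** P' ** ?Q)) *v h) = - (?Q *v ((\<omega> *\<^sub>R P') *v (?Q *v h)))"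
    by (simp add: bounded_bilinear.scaleR_left[OF mv] matrix_vector_mult_scaleR)
  also have "\<dots> = - (?Q *v (J *v h)) + ?S *v (?Q *v h)"
  proof -
    have "?Q ** (P ** X) = X" for X :: "real^'n^'n"
      by (simp add: matrix_mul_assoc matrix_inv_left[OF inv])
    then show ?thesis
      unfolding P' by (simp add: matrix_vector_mult_diff_distrib matrix_vector_mul_assoc
          matrix_inv_left[OF inv] matrix_inv_right[OF inv])
  qed
  finally have "(\<omega> *\<^sub>R ((- (?Q ** P' ** ?Q)) *v h)) $ k = (- (?Q *v (J *v h)) + ?S *v (?Q *v h)) $ k"
    by (rule arg_cong)
  then show ?thesis
    using assms(3) by (simp add: diagonal_matrix_vector_nth)
qed

lemma weighted_denominator_linear_part:
  fixes P P' :: "real^'n^'n"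
  assumes inv: "invertible P"
  defines "Q \<equiv> matrix_inv P"
  defines "Q' \<equiv> - (Q ** P' ** Q)"
  shows "(Q *v h) \<bullet> (Q *v column k P')
      + h \<bullet> ((transpose Q ** Q' + transpose Q' ** Q) *v column k P) = (Q' *v h) $ k"
proof -
  note mv = bounded_bilinear_matrix_vector_mult
  have QP: "Q *v column k P = axis k 1"
    unfolding Q_def by (rule matrix_inv_mult_column[OF inv])
  have "Q' *v column k P = - (Q *v column k P')"
    using QP by (simp add: Q'_def bounded_bilinear.minus_left[OF mv] column_eq_matrix_vector_mult_axis
        flip: matrix_vector_mul_assoc)
  then have "h \<bullet> ((transpose Q ** Q' + transpose Q' ** Q) *v column k P)
      = - ((Q *v h) \<bullet> (Q *v column k P')) + (Q' *v h) \<bullet> axis k 1"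
    by (simp add: bounded_bilinear.add_left[OF mv] inner_add_right inner_transpose_matrix_vector QP
        del: transpose_matrix_vector flip: matrix_vector_mul_assoc)
  then show ?thesis by (simp add: inner_axis)
qed

lemma Hfun_eq_quotient:
  fixes P :: "real \<Rightarrow> real^'n^'n"
  assumes inv: "\<And>t. invertible (P t)" and P': "\<And>t. (P has_vector_derivative P' t) (at t)"
    and col: "\<And>t. column k (P t) = vector_derivative \<Phi> (at t)"
  shows "Hfun F \<Phi> P \<epsilon> v \<theta> = (matrix_inv (P \<theta>) *v F (\<Phi> \<theta> + sqrt \<epsilon> *\<^sub>R v)) $ k
      / (1 - sqrt \<epsilon> * ((- (matrix_inv (P \<theta>) ** P' \<theta> ** matrix_inv (P \<theta>))) *v v) $ k)"
proof -
  define Q where "Q t = matrix_inv (P t)" for t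
  define Q' where "Q' = - (Q \<theta> ** P' \<theta> ** Q \<theta>)"
  have Q': "(Q has_vector_derivative Q') (at \<theta>)"
    using has_vector_derivative_matrix_inv[OF inv P'] unfolding Q_def Q'_def by (simp add: fun_eq_iff)
  have "((\<lambda>a. column k (P a)) has_vector_derivative column k (P' \<theta>)) (at \<theta>)"
    unfolding column_eq_matrix_vector_mult_axis
    by (rule bounded_linear.has_vector_derivative[OF
          bounded_bilinear.bounded_linear_left[OF bounded_bilinear_matrix_vector_mult] P'])
  then have \<Phi>'': "vector_derivative (\<lambda>a. column k (P a)) (at \<theta>) = column k (P' \<theta>)"
    by (rule vector_derivative_at)
  have "((\<lambda>a. transpose (Q a) ** Q a) has_vector_derivative
      transpose (Q \<theta>) ** Q' + transpose Q' ** Q \<theta>) (at \<theta>)"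
    by (rule bounded_bilinear.has_vector_derivative[OF bounded_bilinear_matrix_matrix_mult
          bounded_linear.has_vector_derivative[OF bounded_linear_transpose Q'] Q'])
  then have M': "vector_derivative (\<lambda>a. transpose (Q a) ** Q a) (at \<theta>)
      = transpose (Q \<theta>) ** Q' + transpose Q' ** Q \<theta>"
    by (rule vector_derivative_at)
  have "sqrt \<epsilon> * winner P \<theta> v (column k (P' \<theta>))
      + sqrt \<epsilon> * (v \<bullet> ((transpose (Q \<theta>) ** Q' + transpose Q' ** Q \<theta>) *v column k (P \<theta>)))
      = sqrt \<epsilon> * (Q' *v v) $ k"
    using weighted_denominator_linear_part[OF inv, where P'="P' \<theta>" and h=v and k=k]
    unfolding winner_def Q_def Q'_def by (simp flip: distrib_left)
  then show ?thesis
    unfolding Hfun_def Let_def col[symmetric] \<Phi>'' M'[unfolded Q_def]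
    by (simp add: winner_column[where P=P and a=\<theta>, OF inv] Q_def Q'_def algebra_simps)
qed

lemma deriv_winner_column:
  fixes P :: "real \<Rightarrow> real^'n^'n"
  assumes inv: "\<And>t. invertible (P t)" and P': "\<And>t. (P has_vector_derivative P' t) (at t)"
    and col: "\<And>t. column k (P t) = vector_derivative \<Phi> (at t)"
  shows "deriv (\<lambda>a. winner P a v (vector_derivative \<Phi> (at a))) \<theta>
    = ((- (matrix_inv (P \<theta>) ** P' \<theta> ** matrix_inv (P \<theta>))) *v v) $ k"
proof -
  have "(\<lambda>a. winner P a v (vector_derivative \<Phi> (at a))) = (\<lambda>a. (matrix_inv (P a) *v v) $ k)"
    by (simp add: fun_eq_iff winner_column[where P=P, OF inv] flip: col)
  moreover have "((\<lambda>a. (matrix_inv (P a) *v v) $ k) has_vector_derivative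
      ((- (matrix_inv (P \<theta>) ** P' \<theta> ** matrix_inv (P \<theta>))) *v v) $ k) (at \<theta>)"
    by (rule bounded_linear.has_vector_derivative[OF
          bounded_linear_compose[OF bounded_linear_vec_nth
            bounded_bilinear.bounded_linear_left[OF bounded_bilinear_matrix_vector_mult]]
          has_vector_derivative_matrix_inv[OF inv P']])
  ultimately show ?thesis
    by (simp add: has_real_derivative_iff_has_vector_derivative DERIV_imp_deriv)
qed

lemma has_derivative_row_along_ray:
  fixes F :: "real^'n \<Rightarrow> real^'n"
  assumes "C2_map F"
  shows "((\<lambda>v. (A *v F (x + c *\<^sub>R v)) $ k) has_derivative
      (\<lambda>h. c * (A *v (matrix (frechet_derivative F (at x)) *v h)) $ k)) (at 0)"
proof -
  have ray: "((\<lambda>v. x + c *\<^sub>R v) has_derivative (\<lambda>h. c *\<^sub>R h)) (at 0)"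
    by (auto intro!: derivative_eq_intros)
  have "(F has_derivative (\<lambda>h. matrix (frechet_derivative F (at x)) *v h)) (at (x + c *\<^sub>R 0))"
    using C2_map_has_derivative_matrix[OF assms] by simp
  from bounded_linear.has_derivative[OF
      bounded_linear_compose[OF bounded_linear_vec_nth matrix_vector_mul_bounded_linear]
      diff_chain_at[OF ray this]]
  show ?thesis
    by (simp add: o_def matrix_vector_mult_scaleR)
qed

lemma has_derivative_quotient_critical:
  fixes N :: "'a::real_normed_vector \<Rightarrow> real"
  assumes N: "(N has_derivative N') (at 0)" and L: "bounded_linear L"
    and cancel: "\<And>h. N' h = - N 0 * L h"
  shows "((\<lambda>v. N v / (1 - L v)) has_derivative (\<lambda>h. 0)) (at 0)"
proof -
  have L0: "L 0 = 0" using L by (simp add: bounded_linear.linear linear_0)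
  have "((\<lambda>v. 1 - L v) has_derivative (\<lambda>h. 0 - L h)) (at 0)"
    by (intro has_derivative_diff has_derivative_const bounded_linear_imp_has_derivative L)
  from has_derivative_divide'[OF N this] show ?thesis
    by (simp add: L0 cancel)
qed

theorem mainTheorem4:
  fixes F :: "real^'n \<Rightarrow> real^'n"
    and \<Phi> :: "real \<Rightarrow> real^'n"
    and P :: "real \<Rightarrow> real^'n^'n"
    and \<nu> :: "real^'n"
    and k :: 'n
    and \<omega>\<^sub>0 \<epsilon> \<theta> :: real
  assumes F_C2: "C2_map F"
    and \<Phi>_diff: "\<forall>t. \<Phi> differentiable (at t)"
    and \<Phi>_per: "\<forall>t. \<Phi> (t + 2 * pi) = \<Phi> t"
    and \<omega>_pos: "\<omega>\<^sub>0 > 0"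
    and orbit: "\<forall>t. F (\<Phi> t) = \<omega>\<^sub>0 *\<^sub>R vector_derivative \<Phi> (at t)"
    and \<epsilon>_pos: "\<epsilon> > 0"
    and P_C2: "C2_map P"
    and P_per: "\<forall>t. P (t + 2 * pi) = P t"
    and P_inv: "\<forall>t. invertible (P t)"
    and P_col: "\<forall>t. column k (P t) = vector_derivative \<Phi> (at t)"
    and \<nu>_k: "\<nu> $ k = 0"
    and floquet: "\<forall>t. \<omega>\<^sub>0 *\<^sub>R vector_derivative P (at t) =
        matrix (frechet_derivative F (at (\<Phi> t))) ** P t
        - P t ** (\<chi> i j. if i = j then \<nu> $ i else 0)"
  shows "Hfun F \<Phi> P \<epsilon> 0 \<theta> = \<omega>\<^sub>0
    \<and> ((\<lambda>v. Hfun F \<Phi> P \<epsilon> v \<theta>) has_derivative (\<lambda>v. 0)) (at 0)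
    \<and> (\<forall>v. winner P \<theta> (matrix (frechet_derivative F (at (\<Phi> \<theta>))) *v v)
                 (vector_derivative \<Phi> (at \<theta>))
          = - \<omega>\<^sub>0 * deriv (\<lambda>a. winner P a v (vector_derivative \<Phi> (at a))) \<theta>)"
proof -
  define P' where "P' t = vector_derivative P (at t)" for t
  define Q where "Q = matrix_inv (P \<theta>)"
  define Q' where "Q' = - (Q ** P' \<theta> ** Q)"
  define J where "J = matrix (frechet_derivative F (at (\<Phi> \<theta>)))"
  have inv: "\<And>t. invertible (P t)" and col: "\<And>t. column k (P t) = vector_derivative \<Phi> (at t)"
    using P_inv P_col by blast+
  have P': "(P has_vector_derivative P' t) (at t)" for t
    unfolding P'_def using C2_map_differentiable[OF P_C2] vector_derivative_works by blast
  have row: "\<omega>\<^sub>0 * (Q' *v h) $ k = - (Q *v (J *v h)) $ k" for h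
    unfolding Q'_def Q_def J_def
    by (rule floquet_inverse_derivative_row[OF inv _ \<nu>_k]) (use floquet in \<open>simp add: P'_def\<close>)
  have H: "Hfun F \<Phi> P \<epsilon> v \<theta> = (Q *v F (\<Phi> \<theta> + sqrt \<epsilon> *\<^sub>R v)) $ k / (1 - sqrt \<epsilon> * (Q' *v v) $ k)" for v
    unfolding Q_def Q'_def by (rule Hfun_eq_quotient[OF inv P' col])
  have N0: "(Q *v F (\<Phi> \<theta>)) $ k = \<omega>\<^sub>0"
    using matrix_inv_mult_column[OF inv, of \<theta> k]
    by (simp add: Q_def orbit col matrix_vector_mult_scaleR)
  have "((\<lambda>v. Hfun F \<Phi> P \<epsilon> v \<theta>) has_derivative (\<lambda>h. 0)) (at 0)"
    unfolding H
  proof (rule has_derivative_quotient_critical)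
    show "((\<lambda>v. (Q *v F (\<Phi> \<theta> + sqrt \<epsilon> *\<^sub>R v)) $ k) has_derivative
        (\<lambda>h. sqrt \<epsilon> * (Q *v (J *v h)) $ k)) (at 0)"
      unfolding J_def by (rule has_derivative_row_along_ray[OF F_C2])
    show "bounded_linear (\<lambda>h. sqrt \<epsilon> * (Q' *v h) $ k)"
      by (intro bounded_linear_const_mult bounded_linear_compose[OF bounded_linear_vec_nth]) simp
    show "sqrt \<epsilon> * (Q *v (J *v h)) $ k
        = - (Q *v F (\<Phi> \<theta> + sqrt \<epsilon> *\<^sub>R 0)) $ k * (sqrt \<epsilon> * (Q' *v h) $ k)" for h
      by (simp add: N0 row mult.left_commute[of \<omega>\<^sub>0])
  qed
  moreover have "winner P \<theta> (J *v v) (vector_derivative \<Phi> (at \<theta>))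
      = - \<omega>\<^sub>0 * deriv (\<lambda>a. winner P a v (vector_derivative \<Phi> (at a))) \<theta>" for v
    using row[of v] deriv_winner_column[OF inv P' col]
    by (simp add: Q_def Q'_def winner_column[where P=P, OF inv] flip: col)
  ultimately show ?thesis
    using H N0 unfolding J_def by simp
qed

end
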